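(* Let $m_1 \ge 0$ and let $\mathbf m=[m_2,m_3,\ldots]$ be a sequence of nonnegative integers with finitely many nonzero entries. Put $E = m_1 + 1 + 2m_2 + 3m_3 + 4m_4 + \cdots$ and $V = 2 + m_2 + 2m_3 + 3m_4 + \cdots$. Then the number $R_{m_1;\mathbf m}$ of tubdigons of type $[m_1;\mathbf m]$ equals $$R_{m_1;\mathbf m} = \frac{(E-1)!}{(V-1)!\; m_1!\; m_2!\, m_3! \cdots}.$$
   Context: Tubdigons are the formal expressions generated as follows: the null tubdigon $|$ is a tubdigon, and for every integer $k\ge 1$ and tubdigons $s_1,\ldots,s_k$, the expression $\nabla_k(s_1,\ldots,s_k)$ is a tubdigon (two tubdigons are equal iff they are identical expressions). Geometrically, $\nabla_k(s_1,\ldots,s_k)$ is a roofed $(k+1)$-gon (a 2-gon when $k=1$) with $s_1,\ldots,s_k$ glued along their roofs to its non-roof sides in counterclockwise order; so tubdigons are roofed convex polygons subdivided by non-crossing diagonals into polygons, where 2-gons (doubled edges) are also allowed. The type of a tubdigon is $[m_1;m_2,m_3,\ldots]$ where $m_k$ is the number of occurrences of $\nabla_k$ (the number of $(k+1)$-gon faces). Such a tubdigon has $E$ edges and $V$ vertices as defined in the claim. *)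

theory Defs
  imports Complex_Main
begin

text \<open>Formal expressions: Null is the null tubdigon, Nabla [s1,...,sk] is nabla_k(s1,...,sk).\<close>
datatype tub = Null | Nabla "tub list"

fun is_tubdigon :: "tub \<Rightarrow> bool" where
  "is_tubdigon Null = True"
| "is_tubdigon (Nabla ts) = (ts \<noteq> [] \<and> (\<forall>t\<in>set ts. is_tubdigon t))"

fun occ :: "tub \<Rightarrow> nat \<Rightarrow> nat" where
  "occ Null k = 0"
| "occ (Nabla ts) k = (if length ts = k then 1 else 0) + sum_list (map (\<lambda>t. occ t k) ts)"

text \<open>Tubdigons of type [m 1; m 2, m 3, ...] (the value m 0 is irrelevant).\<close>
definition tubdigons_of_type :: "(nat \<Rightarrow> nat) \<Rightarrow> tub set" where
  "tubdigons_of_type m = {t. is_tubdigon t \<and> (\<forall>k\<ge>1. occ t k = m k)}"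

end

theory Submission
  imports Defs "HOL-Library.Multiset"
begin

(* A tubdigon is a plane tree: Null is a leaf and Nabla ts an inner node whose children are the
   trees ts, so its type counts the inner nodes of each arity. Let F(r, M) be the number of
   sequences of r such trees whose inner nodes have the multiset of arities M. Deleting the root
   of the first tree gives F(r + 1, M) = F(r, M) + (sum over distinct k in M of F(r + k, M - {k})),
   and this recurrence is solved by F(r, M) = r (n - 1)! / (l! prod_k m_k!), where n = r + sum M
   is the number of vertices and l = n - |M| the number of leaves. For r = 1 we have n = E and
   l = V - 1. *)

definition prod_fact_count :: "'a multiset \<Rightarrow> nat" where
  "prod_fact_count M = (\<Prod>x\<in>set_mset M. fact (count M x))"

lemma prod_fact_count_remove:
  assumes "x \<in># M"
  shows "prod_fact_count M = count M x * prod_fact_count (M - {#x#})"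
proof -
  have "prod_fact_count (M - {#x#}) = (\<Prod>y\<in>set_mset M. fact (count (M - {#x#}) y))"
    unfolding prod_fact_count_def
    by (intro prod.mono_neutral_left) (auto simp: not_in_iff dest: in_diffD)
  also have "\<dots> = fact (count M x - 1) * (\<Prod>y\<in>set_mset M - {x}. fact (count M y))"
    using assms by (simp add: prod.remove) (intro prod.cong; auto)
  finally show ?thesis
    using assms by (simp add: prod_fact_count_def prod.remove fact_reduce[of "count M x"])
qed

lemma sum_set_mset_count: "(\<Sum>x\<in>set_mset M. count M x * f x) = (\<Sum>x\<in>#M. f x)"
proof (induction M)
  case (add a M)
  have "(\<Sum>x\<in>set_mset (add_mset a M). count (add_mset a M) x * f x) =
          (\<Sum>x\<in>set_mset (add_mset a M). count M x * f x + (if x = a then f x else 0))"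
    by (intro sum.cong) auto
  also have "\<dots> = (\<Sum>x\<in>set_mset (add_mset a M). count M x * f x) + f a"
    by (simp add: sum.distrib)
  also have "(\<Sum>x\<in>set_mset (add_mset a M). count M x * f x) = (\<Sum>x\<in>set_mset M. count M x * f x)"
    by (intro sum.mono_neutral_right) (auto simp: not_in_iff)
  finally show ?case
    using add.IH by simp
qed simp

lemma size_le_sum_mset: "0 \<notin># M \<Longrightarrow> size M \<le> \<Sum>\<^sub># (M :: nat multiset)"
  by (induction M) (auto simp: Suc_le_eq)

fun arity_mset :: "tub \<Rightarrow> nat multiset" where
  "arity_mset Null = {#}"
| "arity_mset (Nabla ts) = add_mset (length ts) (\<Sum>t\<leftarrow>ts. arity_mset t)"

lemma occ_eq_count_arity_mset: "occ t k = count (arity_mset t) k"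
proof (induction t)
  case (Nabla ts)
  have "count (\<Sum>t\<leftarrow>ts. arity_mset t) k = (\<Sum>t\<leftarrow>ts. count (arity_mset t) k)"
    by (induction ts) simp_all
  also have "\<dots> = (\<Sum>t\<leftarrow>ts. occ t k)"
    using Nabla.IH by (intro arg_cong[where f = sum_list] map_cong) simp_all
  finally show ?case by simp
qed simp

lemma zero_not_in_arity_mset: "is_tubdigon t \<Longrightarrow> 0 \<notin># arity_mset t"
  by (induction t) auto

definition tub_forests :: "nat \<Rightarrow> nat multiset \<Rightarrow> tub list set" where
  "tub_forests r M =
     {ts. length ts = r \<and> (\<forall>t\<in>set ts. is_tubdigon t) \<and> (\<Sum>t\<leftarrow>ts. arity_mset t) = M}"

definition join :: "nat \<Rightarrow> tub list \<Rightarrow> tub list" where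
  "join k ts = Nabla (take k ts) # drop k ts"

lemma inj_join: "inj (join k)"
  by (rule injI) (metis append_take_drop_id join_def list.inject tub.inject)

lemma tub_forests_0: "tub_forests 0 M = (if M = {#} then {[]} else {})"
  by (auto simp: tub_forests_def)

lemma join_mem_tub_forests:
  assumes "0 \<notin># M" and k: "k \<in># M" and ts: "ts \<in> tub_forests (r + k) (M - {#k#})"
  shows "join k ts \<in> tub_forests (Suc r) M"
proof -
  have "k \<noteq> 0" using k assms(1) by metis
  with ts have "take k ts \<noteq> []" by (auto simp: tub_forests_def)
  moreover have "(\<Sum>t\<leftarrow>take k ts. arity_mset t) + (\<Sum>t\<leftarrow>drop k ts. arity_mset t) = M - {#k#}"
    using ts unfolding tub_forests_def
    by (metis (mono_tags) append_take_drop_id map_append mem_Collect_eq sum_list_append)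
  ultimately show ?thesis using k ts
    by (auto simp: tub_forests_def join_def dest: in_set_takeD in_set_dropD)
qed

lemma tub_forests_Suc:
  assumes "0 \<notin># M"
  shows "tub_forests (Suc r) M = Cons Null ` tub_forests r M \<union>
           (\<Union>k\<in>set_mset M. join k ` tub_forests (r + k) (M - {#k#}))"
    (is "?L = ?A \<union> ?B")
proof
  show "?L \<subseteq> ?A \<union> ?B"
  proof
    fix xs assume xs: "xs \<in> ?L"
    then obtain t rest where xs_eq: "xs = t # rest"
      by (cases xs) (auto simp: tub_forests_def)
    show "xs \<in> ?A \<union> ?B"
    proof (cases t)
      case Null
      then show ?thesis using xs xs_eq by (auto simp: tub_forests_def)
    next
      case (Nabla us)
      let ?k = "length us"
      have M: "M = add_mset ?k ((\<Sum>t\<leftarrow>us. arity_mset t) + (\<Sum>t\<leftarrow>rest. arity_mset t))"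
        using xs xs_eq Nabla by (auto simp: tub_forests_def)
      then have "us @ rest \<in> tub_forests (r + ?k) (M - {#?k#})"
        using xs xs_eq Nabla by (auto simp: tub_forests_def)
      moreover have "xs = join ?k (us @ rest)"
        using xs_eq Nabla by (simp add: join_def)
      ultimately show ?thesis using M by auto
    qed
  qed
next
  have "?A \<subseteq> ?L"
    by (auto simp: tub_forests_def)
  moreover have "?B \<subseteq> ?L"
    using join_mem_tub_forests[OF assms] by blast
  ultimately show "?A \<union> ?B \<subseteq> ?L"
    by blast
qed

lemma finite_tub_forests: "0 \<notin># M \<Longrightarrow> finite (tub_forests r M)"
proof (induction "r + \<Sum>\<^sub># M" arbitrary: r M rule: less_induct)
  case less
  show ?case
  proof (cases r)
    case 0
    then show ?thesis by (simp add: tub_forests_0)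
  next
    case (Suc q)
    have "finite (tub_forests q M)"
      using less Suc by simp
    moreover have "finite (tub_forests (q + k) (M - {#k#}))" if "k \<in># M" for k
    proof -
      have "0 \<notin># M - {#k#}"
        using less.prems by (meson in_diffD)
      moreover have "q + k + \<Sum>\<^sub># (M - {#k#}) < r + \<Sum>\<^sub># M"
        using that Suc by (simp add: sum_mset.remove)
      ultimately show ?thesis
        using less.hyps by blast
    qed
    ultimately show ?thesis
      using less.prems Suc by (simp add: tub_forests_Suc)
  qed
qed

lemma card_tub_forests_Suc:
  assumes "0 \<notin># M"
  shows "card (tub_forests (Suc r) M) =
           card (tub_forests r M) + (\<Sum>k\<in>set_mset M. card (tub_forests (r + k) (M - {#k#})))"
proof -
  have zero_notin: "0 \<notin># M - {#k#}" for k
    using assms by (meson in_diffD)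
  have disjoint: "join i ` tub_forests (r + i) (M - {#i#}) \<inter> join j ` tub_forests (r + j) (M - {#j#}) = {}"
    if "i \<noteq> j" for i j
  proof -
    have "length (take k ts) = k" if "ts \<in> tub_forests (r + k) N" for k ts N
      using that by (simp add: tub_forests_def)
    moreover have "take i a \<noteq> take j b" if "length (take i a) = i" "length (take j b) = j" for a b
      using that \<open>i \<noteq> j\<close> by metis
    ultimately show ?thesis
      by (force simp: join_def)
  qed
  have "card (\<Union>k\<in>set_mset M. join k ` tub_forests (r + k) (M - {#k#})) =
          (\<Sum>k\<in>set_mset M. card (join k ` tub_forests (r + k) (M - {#k#})))"
    by (rule card_UN_disjoint) (use disjoint finite_tub_forests zero_notin in auto)
  also have "\<dots> = (\<Sum>k\<in>set_mset M. card (tub_forests (r + k) (M - {#k#})))"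
    by (intro sum.cong refl card_image inj_on_subset[OF inj_join]) simp
  finally show ?thesis
    unfolding tub_forests_Suc[OF assms]
    by (subst card_Un_disjoint)
       (auto simp: join_def card_image finite_tub_forests assms zero_notin)
qed

lemma card_tub_forests_step:
  fixes q :: nat and M :: "nat multiset"
  defines "N \<equiv> q + \<Sum>\<^sub># M"
  defines "L \<equiv> Suc N - size M"
  assumes M0: "0 \<notin># M"
    and IH_Null: "card (tub_forests q M) * fact (N - size M) * prod_fact_count M * N = q * fact N"
    and IH_join: "\<And>k. k \<in># M \<Longrightarrow>
      card (tub_forests (q + k) (M - {#k#})) * fact L * prod_fact_count (M - {#k#}) * N = (q + k) * fact N"
  shows "card (tub_forests (Suc q) M) * fact L * prod_fact_count M = Suc q * fact N"
proof (cases "N = 0")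
  case True
  then have "q = 0" "M = {#}"
    using M0 by (auto simp: N_def) (metis multiset_nonemptyE)
  then show ?thesis
    using True by (simp add: L_def prod_fact_count_def tub_forests_Suc tub_forests_0)
next
  case False
  have L_Suc: "L = Suc (N - size M)" and L_size: "L + size M = Suc N"
    using size_le_sum_mset[OF M0] by (simp_all add: L_def N_def)
  have "card (tub_forests (Suc q) M) * fact L * prod_fact_count M * N =
          card (tub_forests q M) * fact L * prod_fact_count M * N +
          (\<Sum>k\<in>set_mset M. card (tub_forests (q + k) (M - {#k#})) * fact L * prod_fact_count M * N)"
    by (simp add: card_tub_forests_Suc M0 sum_distrib_right add_mult_distrib)
  also have "\<dots> = card (tub_forests q M) * fact L * prod_fact_count M * N +
          (\<Sum>k\<in>set_mset M. count M k *
             (card (tub_forests (q + k) (M - {#k#})) * fact L * prod_fact_count (M - {#k#}) * N))"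
    by (intro arg_cong2[where f = "(+)"] refl sum.cong) (simp_all add: prod_fact_count_remove)
  also have "\<dots> = L * q * fact N + (\<Sum>k\<in>set_mset M. count M k * ((q + k) * fact N))"
  proof -
    have "card (tub_forests q M) * fact L * prod_fact_count M * N =
            L * (card (tub_forests q M) * fact (N - size M) * prod_fact_count M * N)"
      by (simp only: L_Suc fact_Suc of_nat_id mult_ac)
    moreover have "(\<Sum>k\<in>set_mset M. count M k *
             (card (tub_forests (q + k) (M - {#k#})) * fact L * prod_fact_count (M - {#k#}) * N)) =
          (\<Sum>k\<in>set_mset M. count M k * ((q + k) * fact N))"
      by (intro sum.cong) (simp_all add: IH_join)
    ultimately show ?thesis
      by (simp add: IH_Null)
  qed
  also have "\<dots> = (L * q + q * size M + \<Sum>\<^sub># M) * fact N"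
  proof -
    have "(\<Sum>k\<in>#M. (q + k) * fact N) = (q * size M + \<Sum>\<^sub># M) * fact N"
      by (induction M) (simp_all add: algebra_simps)
    then show ?thesis
      by (simp add: sum_set_mset_count add_mult_distrib)
  qed
  also have "\<dots> = N * (Suc q * fact N)"
  proof -
    have "L * q + q * size M = Suc N * q"
      using L_size by (metis add_mult_distrib mult.commute)
    then show ?thesis
      by (simp add: N_def algebra_simps)
  qed
  finally show ?thesis
    using False by simp
qed

(* Multiplied by the number of vertices r + sum M, the formula also holds for r = 0. *)
lemma card_tub_forests:
  assumes "0 \<notin># M"
  shows "card (tub_forests r M) * fact (r + \<Sum>\<^sub># M - size M) * prod_fact_count M * (r + \<Sum>\<^sub># M) =
           r * fact (r + \<Sum>\<^sub># M)"
  using assms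
proof (induction "r + \<Sum>\<^sub># M" arbitrary: r M rule: less_induct)
  case less
  show ?case
  proof (cases r)
    case 0
    then show ?thesis by (simp add: tub_forests_0)
  next
    case (Suc q)
    define N where "N = q + \<Sum>\<^sub># M"
    have IH_join: "card (tub_forests (q + k) (M - {#k#})) * fact (Suc N - size M) *
        prod_fact_count (M - {#k#}) * N = (q + k) * fact N" if k: "k \<in># M" for k
    proof -
      have sum_eq: "q + k + \<Sum>\<^sub># (M - {#k#}) = N"
        using k by (simp add: N_def sum_mset.remove)
      have size_eq: "N - size (M - {#k#}) = Suc N - size M"
        using k size_Diff_singleton[OF k] by (cases "size M") auto
      have "0 \<notin># M - {#k#}"
        using less.prems by (meson in_diffD)
      moreover have "q + k + \<Sum>\<^sub># (M - {#k#}) < r + \<Sum>\<^sub># M"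
        using sum_eq Suc by (simp add: N_def)
      ultimately have "card (tub_forests (q + k) (M - {#k#})) *
          fact (q + k + \<Sum>\<^sub># (M - {#k#}) - size (M - {#k#})) * prod_fact_count (M - {#k#}) *
          (q + k + \<Sum>\<^sub># (M - {#k#})) = (q + k) * fact (q + k + \<Sum>\<^sub># (M - {#k#}))"
        using less.hyps by blast
      then show ?thesis
        unfolding sum_eq size_eq .
    qed
    have "card (tub_forests q M) * fact (N - size M) * prod_fact_count M * N = q * fact N"
      using less Suc by (simp add: N_def)
    with IH_join have "card (tub_forests r M) * fact (Suc N - size M) * prod_fact_count M = r * fact N"
      unfolding Suc N_def using less.prems by (intro card_tub_forests_step) simp_all
    moreover have "r + \<Sum>\<^sub># M = Suc N"
      by (simp add: Suc N_def)
    ultimately show ?thesis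
      by (simp only: fact_Suc of_nat_id) (simp add: mult_ac)
  qed
qed

lemma card_tubdigons_with_arity_mset:
  assumes "0 \<notin># M"
  shows "card {t. is_tubdigon t \<and> arity_mset t = M} * fact (1 + \<Sum>\<^sub># M - size M) * prod_fact_count M =
           fact (\<Sum>\<^sub># M)"
proof -
  have "tub_forests 1 M = (\<lambda>t. [t]) ` {t. is_tubdigon t \<and> arity_mset t = M}"
    by (auto simp: tub_forests_def length_Suc_conv)
  then have "card (tub_forests 1 M) = card {t. is_tubdigon t \<and> arity_mset t = M}"
    by (simp add: card_image inj_on_def)
  with card_tub_forests[OF assms, of 1]
  have "card {t. is_tubdigon t \<and> arity_mset t = M} * fact (1 + \<Sum>\<^sub># M - size M) * prod_fact_count M *
          Suc (\<Sum>\<^sub># M) = fact (\<Sum>\<^sub># M) * Suc (\<Sum>\<^sub># M)"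
    by (simp add: algebra_simps)
  then show ?thesis
    by (simp only: mult_cancel2 nat.distinct simp_thms)
qed

definition type_mset :: "(nat \<Rightarrow> nat) \<Rightarrow> nat multiset" where
  "type_mset m = (\<Sum>k | 1 \<le> k \<and> m k \<noteq> 0. replicate_mset (m k) k)"

context
  fixes m :: "nat \<Rightarrow> nat"
  assumes finite_support: "finite {k. m k \<noteq> 0}"
begin

lemma count_type_mset: "count (type_mset m) k = (if 1 \<le> k then m k else 0)"
proof -
  have "finite {k. 1 \<le> k \<and> m k \<noteq> 0}"
    using finite_support by (simp add: finite_subset)
  then show ?thesis
    by (auto simp: type_mset_def count_sum sum.delta)
qed

lemma set_mset_type_mset: "set_mset (type_mset m) = {k. 1 \<le> k \<and> m k \<noteq> 0}"
  unfolding set_mset_def by (auto simp: count_type_mset)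

lemma tubdigons_of_type_eq: "tubdigons_of_type m = {t. is_tubdigon t \<and> arity_mset t = type_mset m}"
proof -
  have "(\<forall>k\<ge>1. occ t k = m k) \<longleftrightarrow> arity_mset t = type_mset m" if "is_tubdigon t" for t
    using zero_not_in_arity_mset[OF that]
    by (auto simp: multiset_eq_iff occ_eq_count_arity_mset count_type_mset not_in_iff Suc_le_eq)
  then show ?thesis
    unfolding tubdigons_of_type_def by blast
qed

lemma zero_not_in_type_mset: "0 \<notin># type_mset m"
  by (simp add: count_type_mset flip: count_eq_zero_iff)

lemma sum_mset_type_mset: "\<Sum>\<^sub># (type_mset m) = (\<Sum>k | 1 \<le> k \<and> m k \<noteq> 0. k * m k)"
proof -
  have "\<Sum>\<^sub># (type_mset m) = (\<Sum>k\<in>set_mset (type_mset m). count (type_mset m) k * k)"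
    using sum_set_mset_count[of "type_mset m" id] by simp
  also have "\<dots> = (\<Sum>k | 1 \<le> k \<and> m k \<noteq> 0. k * m k)"
    unfolding set_mset_type_mset by (intro sum.cong) (simp_all add: count_type_mset)
  finally show ?thesis .
qed

lemma size_type_mset: "size (type_mset m) = (\<Sum>k | 1 \<le> k \<and> m k \<noteq> 0. m k)"
  by (simp add: type_mset_def)

lemma prod_fact_count_type_mset:
  "prod_fact_count (type_mset m) = (\<Prod>k | 1 \<le> k \<and> m k \<noteq> 0. fact (m k))"
  unfolding prod_fact_count_def set_mset_type_mset
  by (intro prod.cong) (simp_all add: count_type_mset)

lemma sum_mset_minus_size_type_mset:
  "\<Sum>\<^sub># (type_mset m) - size (type_mset m) = (\<Sum>k | 1 \<le> k \<and> m k \<noteq> 0. (k - 1) * m k)"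
  unfolding sum_mset_type_mset size_type_mset
  by (subst sum_subtractf_nat[symmetric]) (simp_all add: diff_mult_distrib)

end

theorem mainTheorem3:
  fixes m :: "nat \<Rightarrow> nat"
  assumes fin: "finite {k. m k \<noteq> 0}"
  defines "S \<equiv> {k. 1 \<le> k \<and> m k \<noteq> 0}"
  defines "E \<equiv> 1 + (\<Sum>k\<in>S. k * m k)"
  defines "V \<equiv> 2 + (\<Sum>k\<in>S. (k - 1) * m k)"
  shows "real (card (tubdigons_of_type m)) =
           fact (E - 1) / (fact (V - 1) * (\<Prod>k\<in>S. fact (m k)))"
proof -
  have M0: "0 \<notin># type_mset m"
    using fin by (rule zero_not_in_type_mset)
  have "E - 1 = \<Sum>\<^sub># (type_mset m)"
    unfolding E_def S_def sum_mset_type_mset[OF fin] by simp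
  moreover have "V - 1 = 1 + \<Sum>\<^sub># (type_mset m) - size (type_mset m)"
    using size_le_sum_mset[OF M0]
    unfolding V_def S_def sum_mset_minus_size_type_mset[OF fin, symmetric] by linarith
  ultimately have "card (tubdigons_of_type m) * fact (V - 1) * (\<Prod>k\<in>S. fact (m k)) = fact (E - 1)"
    using card_tubdigons_with_arity_mset[OF M0]
    unfolding tubdigons_of_type_eq[OF fin] prod_fact_count_type_mset[OF fin] S_def by simp
  from arg_cong[where f = real, OF this]
  have "real (card (tubdigons_of_type m)) * (fact (V - 1) * (\<Prod>k\<in>S. fact (m k))) = fact (E - 1)"
    by (simp only: of_nat_mult of_nat_fact of_nat_prod mult.assoc)
  moreover have "(fact (V - 1) * (\<Prod>k\<in>S. fact (m k)) :: real) > 0"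
    by (simp add: prod_pos)
  ultimately show ?thesis
    by (subst nonzero_eq_divide_eq) auto
qed

end
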